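(* Let $p_1,p_2\in(0,1)$ and $U_1^+,U_1^-,U_2^+,U_2^->0$. Consider the linear program (AUX) in the variables $c=(c_1^+,c_1^-,c_2^+,c_2^-)\in\mathbb{R}^4$: maximize $W'(c)=p_1U_1^+c_1^+-(1-p_1)U_1^-c_1^-+p_2U_2^+c_2^+-(1-p_2)U_2^-c_2^-$ subject to $p_1c_2^+-(1-p_1)c_2^-\le p_1^2$; $p_2c_1^+-(1-p_2)c_1^-\le p_2^2$; $p_1c_1^++(1-p_1)c_1^-=p_2c_2^++(1-p_2)c_2^-$; and $0\le c_1^+,c_1^-,c_2^+,c_2^-\le 1$. Then at least one of $c^{(1)}=(c_1^+=1,\ c_1^-=p_2,\ c_2^+=1,\ c_2^-=p_1)$ and $c^{(2)}=(c_1^+=p_2,\ c_1^-=0,\ c_2^+=p_1,\ c_2^-=0)$ is an optimal solution of (AUX). *)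

theory Defs
  imports Complex_Main
begin

definition aux_obj :: "real \<Rightarrow> real \<Rightarrow> real \<Rightarrow> real \<Rightarrow> real \<Rightarrow> real \<Rightarrow>
    real \<times> real \<times> real \<times> real \<Rightarrow> real" where
  "aux_obj p1 p2 U1p U1m U2p U2m c = (case c of (c1p, c1m, c2p, c2m) \<Rightarrow>
     p1 * U1p * c1p - (1 - p1) * U1m * c1m + p2 * U2p * c2p - (1 - p2) * U2m * c2m)"

definition aux_feasible :: "real \<Rightarrow> real \<Rightarrow> real \<times> real \<times> real \<times> real \<Rightarrow> bool" where
  "aux_feasible p1 p2 c = (case c of (c1p, c1m, c2p, c2m) \<Rightarrow>
     p1 * c2p - (1 - p1) * c2m \<le> p1^2 \<and>
     p2 * c1p - (1 - p2) * c1m \<le> p2^2 \<and>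
     p1 * c1p + (1 - p1) * c1m = p2 * c2p + (1 - p2) * c2m \<and>
     0 \<le> c1p \<and> c1p \<le> 1 \<and> 0 \<le> c1m \<and> c1m \<le> 1 \<and>
     0 \<le> c2p \<and> c2p \<le> 1 \<and> 0 \<le> c2m \<and> c2m \<le> 1)"

definition aux_optimal :: "real \<Rightarrow> real \<Rightarrow> real \<Rightarrow> real \<Rightarrow> real \<Rightarrow> real \<Rightarrow>
    real \<times> real \<times> real \<times> real \<Rightarrow> bool" where
  "aux_optimal p1 p2 U1p U1m U2p U2m c \<longleftrightarrow>
     aux_feasible p1 p2 c \<and>
     (\<forall>d. aux_feasible p1 p2 d \<longrightarrow> aux_obj p1 p2 U1p U1m U2p U2m d \<le> aux_obj p1 p2 U1p U1m U2p U2m c)"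

end

theory Submission
  imports Defs
begin

text \<open>Write \<open>s\<close> for the common value of the two sides of the equality constraint. Then the
  objective equals \<open>A c\<^sub>1\<^sup>+ + B c\<^sub>2\<^sup>+ - (U\<^sub>1\<^sup>- + U\<^sub>2\<^sup>-) s\<close> with \<open>A, B > 0\<close>, and each of \<open>c\<^sub>1\<^sup>+, c\<^sub>2\<^sup>+\<close>
  is bounded by three affine functions of \<open>s\<close>, coming from \<open>c\<^sup>- \<ge> 0\<close>, from the inequality
  constraint and from \<open>c\<^sup>+ \<le> 1\<close>. For both coordinates these bounds cross at the same two points
  \<open>s = p\<^sub>1p\<^sub>2\<close> and \<open>s = p\<^sub>1 + p\<^sub>2 - p\<^sub>1p\<^sub>2\<close>, where the bounds are attained by the second and
  the first candidate point respectively.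
  The resulting concave piecewise affine bound on the objective increases before the first
  point and decreases after the second, so it is maximal at one of them.\<close>

lemma le_max_at_breakpoints:
  fixes f h :: "real \<Rightarrow> real"
  assumes "mono f" "antimono h" "t\<^sub>1 \<le> t\<^sub>2"
    and "f t\<^sub>1 = \<alpha> + \<beta> * t\<^sub>1" "h t\<^sub>2 = \<alpha> + \<beta> * t\<^sub>2"
    and "z \<le> f s" "z \<le> \<alpha> + \<beta> * s" "z \<le> h s"
  shows "z \<le> max (f t\<^sub>1) (h t\<^sub>2)"
proof -
  consider "s \<le> t\<^sub>1" | "t\<^sub>2 \<le> s" | "t\<^sub>1 \<le> s" "s \<le> t\<^sub>2" "0 \<le> \<beta>" | "t\<^sub>1 \<le> s" "s \<le> t\<^sub>2" "\<beta> < 0"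
    by linarith
  then show ?thesis
  proof cases
    case 1
    then show ?thesis using assms monoD[OF \<open>mono f\<close>] by fastforce
  next
    case 2
    then show ?thesis using assms antimonoD[OF \<open>antimono h\<close>] by fastforce
  next
    case 3
    then have "\<beta> * s \<le> \<beta> * t\<^sub>2" by (simp add: mult_left_mono)
    then show ?thesis using assms by linarith
  next
    case 4
    then have "\<beta> * s \<le> \<beta> * t\<^sub>1" by (simp add: mult_left_mono_neg)
    then show ?thesis using assms by linarith
  qed
qed

lemma mixture_coordinate_bound:
  fixes p q a b :: real
  assumes "p < 1" "q < 1" and "q * a - (1 - q) * b \<le> q\<^sup>2"
  shows "(p + q - 2 * p * q) * a \<le> q\<^sup>2 * (1 - p) + (1 - q) * (p * a + (1 - p) * b)"
proof -
  have "(1 - p) * (q * a - (1 - q) * b) \<le> (1 - p) * q\<^sup>2"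
    using assms by (intro mult_left_mono) auto
  then show ?thesis by (simp add: algebra_simps)
qed

lemma reduced_objective_le_max:
  fixes p1 p2 U1p U1m U2p U2m a x s :: real
  defines "D \<equiv> p1 + p2 - 2 * p1 * p2"
    and "A \<equiv> p1 * (U1p + U1m)" and "B \<equiv> p2 * (U2p + U2m)" and "U \<equiv> U1m + U2m"
  assumes p: "0 < p1" "p1 < 1" "0 < p2" "p2 < 1"
    and nonneg: "0 \<le> U1p" "0 \<le> U1m" "0 \<le> U2p" "0 \<le> U2m"
    and "a \<le> 1" "x \<le> 1" "p1 * a \<le> s" "p2 * x \<le> s"
    and "D * a \<le> p2\<^sup>2 * (1 - p1) + (1 - p2) * s"
    and "D * x \<le> p1\<^sup>2 * (1 - p2) + (1 - p1) * s"
  shows "A * a + B * x - U * s \<le> max ((U1p + U2p) * (p1 * p2)) (A + B - U * (p1 + p2 - p1 * p2))"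
proof -
  define \<alpha> where "\<alpha> = (A * p2\<^sup>2 * (1 - p1) + B * p1\<^sup>2 * (1 - p2)) / D"
  define \<beta> where "\<beta> = (A * (1 - p2) + B * (1 - p1)) / D - U"
  have "0 < p1 * (1 - p2) + p2 * (1 - p1)" using p by (simp add: add_pos_pos)
  then have "0 < D" by (simp add: D_def algebra_simps)
  have "0 \<le> A" "0 \<le> B" using p nonneg by (simp_all add: A_def B_def)
  have middle_affine: "A * ((p2\<^sup>2 * (1 - p1) + (1 - p2) * t) / D)
      + B * ((p1\<^sup>2 * (1 - p2) + (1 - p1) * t) / D) - U * t = \<alpha> + \<beta> * t" for t
    using \<open>0 < D\<close> by (simp add: \<alpha>_def \<beta>_def field_simps)
  have "(U1p + U1m) * (p1 * a) + (U2p + U2m) * (p2 * x) \<le> (U1p + U1m) * s + (U2p + U2m) * s"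
    using assms by (intro add_mono mult_left_mono) auto
  then have rising: "A * a + B * x - U * s \<le> (U1p + U2p) * s"
    by (simp add: A_def B_def U_def algebra_simps)
  have falling: "A * a + B * x - U * s \<le> A + B - U * s"
    using assms \<open>0 \<le> A\<close> \<open>0 \<le> B\<close> by (simp add: add_mono mult_left_le)
  have "a \<le> (p2\<^sup>2 * (1 - p1) + (1 - p2) * s) / D" "x \<le> (p1\<^sup>2 * (1 - p2) + (1 - p1) * s) / D"
    using assms \<open>0 < D\<close> by (simp_all add: pos_le_divide_eq mult.commute)
  then have "A * a + B * x \<le>
      A * ((p2\<^sup>2 * (1 - p1) + (1 - p2) * s) / D) + B * ((p1\<^sup>2 * (1 - p2) + (1 - p1) * s) / D)"
    using \<open>0 \<le> A\<close> \<open>0 \<le> B\<close> by (intro add_mono mult_left_mono)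
  then have middle: "A * a + B * x - U * s \<le> \<alpha> + \<beta> * s"
    by (simp add: middle_affine[symmetric])
  have "p2\<^sup>2 * (1 - p1) + (1 - p2) * (p1 * p2) = p2 * D"
    "p1\<^sup>2 * (1 - p2) + (1 - p1) * (p1 * p2) = p1 * D"
    by (simp_all add: D_def algebra_simps power2_eq_square)
  then have "(U1p + U2p) * (p1 * p2) = \<alpha> + \<beta> * (p1 * p2)"
    using \<open>0 < D\<close> by (simp add: middle_affine[symmetric] A_def B_def U_def algebra_simps)
  moreover have "p2\<^sup>2 * (1 - p1) + (1 - p2) * (p1 + p2 - p1 * p2) = D"
    "p1\<^sup>2 * (1 - p2) + (1 - p1) * (p1 + p2 - p1 * p2) = D"
    by (simp_all add: D_def algebra_simps power2_eq_square)
  then have "A + B - U * (p1 + p2 - p1 * p2) = \<alpha> + \<beta> * (p1 + p2 - p1 * p2)"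
    using \<open>0 < D\<close> by (simp add: middle_affine[symmetric])
  moreover have "mono (\<lambda>t. (U1p + U2p) * t)" using nonneg by (intro monoI mult_left_mono) auto
  moreover have "antimono (\<lambda>t. A + B - U * t)"
    using nonneg by (intro antimonoI) (simp add: U_def mult_left_mono)
  moreover have "p1 * p2 \<le> p1 + p2 - p1 * p2"
    using \<open>0 < D\<close> by (simp add: D_def)
  ultimately show ?thesis
    using rising middle falling by (intro le_max_at_breakpoints) auto
qed

lemma aux_obj_le_max_vertices:
  fixes p1 p2 U1p U1m U2p U2m :: real
  assumes p: "0 < p1" "p1 < 1" "0 < p2" "p2 < 1"
    and U: "U1p > 0" "U1m > 0" "U2p > 0" "U2m > 0"
    and "aux_feasible p1 p2 d"
  shows "aux_obj p1 p2 U1p U1m U2p U2m d \<le>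
    max (aux_obj p1 p2 U1p U1m U2p U2m (p2, 0, p1, 0)) (aux_obj p1 p2 U1p U1m U2p U2m (1, p2, 1, p1))"
proof -
  obtain a b x y where d: "d = (a, b, x, y)" by (cases d)
  define s where "s = p1 * a + (1 - p1) * b"
  have c1: "p1 * x - (1 - p1) * y \<le> p1\<^sup>2" and c2: "p2 * a - (1 - p2) * b \<le> p2\<^sup>2"
    and s': "s = p2 * x + (1 - p2) * y"
    and box: "0 \<le> a" "a \<le> 1" "0 \<le> b" "0 \<le> x" "x \<le> 1" "0 \<le> y"
    using \<open>aux_feasible p1 p2 d\<close> by (auto simp: aux_feasible_def d s_def)
  have "U1m * s + U2m * s = U1m * (p1 * a + (1 - p1) * b) + U2m * (p2 * x + (1 - p2) * y)"
    by (simp add: s_def flip: s')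
  then have obj: "aux_obj p1 p2 U1p U1m U2p U2m d
      = p1 * (U1p + U1m) * a + p2 * (U2p + U2m) * x - (U1m + U2m) * s"
    by (simp add: aux_obj_def d algebra_simps)
  have "p1 * a \<le> s" unfolding s_def using p box by simp
  moreover have "p2 * x \<le> s" unfolding s' using p box by simp
  moreover have "(p1 + p2 - 2 * p1 * p2) * a \<le> p2\<^sup>2 * (1 - p1) + (1 - p2) * s"
    using mixture_coordinate_bound[OF p(2) p(4) c2] by (simp add: s_def)
  moreover have "(p1 + p2 - 2 * p1 * p2) * x \<le> p1\<^sup>2 * (1 - p2) + (1 - p1) * s"
    using mixture_coordinate_bound[OF p(4) p(2) c1] by (simp add: s' algebra_simps)
  ultimately have "aux_obj p1 p2 U1p U1m U2p U2m d \<le> max ((U1p + U2p) * (p1 * p2))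
      (p1 * (U1p + U1m) + p2 * (U2p + U2m) - (U1m + U2m) * (p1 + p2 - p1 * p2))"
    unfolding obj using p U box by (intro reduced_objective_le_max) auto
  then show ?thesis
    by (simp add: aux_obj_def algebra_simps)
qed

theorem lemma3:
  fixes p1 p2 U1p U1m U2p U2m :: real
  assumes "0 < p1" "p1 < 1" "0 < p2" "p2 < 1"
    and "U1p > 0" "U1m > 0" "U2p > 0" "U2m > 0"
  shows "aux_optimal p1 p2 U1p U1m U2p U2m (1, p2, 1, p1) \<or>
         aux_optimal p1 p2 U1p U1m U2p U2m (p2, 0, p1, 0)"
proof -
  let ?W = "aux_obj p1 p2 U1p U1m U2p U2m"
  have "aux_feasible p1 p2 (1, p2, 1, p1)" "aux_feasible p1 p2 (p2, 0, p1, 0)"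
    using assms by (simp_all add: aux_feasible_def algebra_simps power2_eq_square)
  moreover have "?W d \<le> max (?W (p2, 0, p1, 0)) (?W (1, p2, 1, p1))" if "aux_feasible p1 p2 d" for d
    using aux_obj_le_max_vertices[OF assms that] .
  ultimately show ?thesis
    unfolding aux_optimal_def by (smt (verit) max_def)
qed

end
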